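(* Let $\kappa$ be an uncountable regular cardinal, let $\mathcal{I}$ be a $\kappa$-complete proper ideal on $\kappa$ containing every bounded subset of $\kappa$, and let $\nu\in\{2,\kappa\}$. Let $\varphi\colon\mathrm{Fn}_{\mathcal{I}}({}^{\kappa}\nu)\to\mathrm{Fn}_{\mathcal{I}}({}^{\kappa}\nu)$ be continuous. Then $\varphi^*\colon{}^{\kappa}\nu\to{}^{\kappa}\nu$ is continuous with respect to $\tau_{\mathcal{I}}$ on both sides.
   Context: ${}^{\kappa}\nu$ is the set of functions $\kappa\to\nu$, $\mathrm{Fn}_{\mathcal{I}}({}^{\kappa}\nu)$ the set of functions $f\colon D\to\nu$ with $D\in\mathcal{I}$, $\mathbf{N}_f=\{x:f\subseteq x\}$, and $\tau_{\mathcal{I}}$ the topology on ${}^{\kappa}\nu$ generated by the sets $\mathbf{N}_f$. A map $\varphi\colon\mathrm{Fn}_{\mathcal{I}}\to\mathrm{Fn}_{\mathcal{I}}$ is monotone if $f\subseteq g$ implies $\varphi(f)\subseteq\varphi(g)$; it is continuous if it is monotone and for all $x\in{}^{\kappa}\nu$ and $D\in\mathcal{I}$ there is $E\in\mathcal{I}$ with $D\subseteq\mathrm{dom}(\varphi(x\restriction E))$. For continuous $\varphi$, $\varphi^*(x)=\lim_{D\in\mathcal{I}}\varphi(x\restriction D)$, the limit of the net indexed by the directed set $(\mathcal{I},\subseteq)$ in $({}^{\kappa}\nu,\tau_{\mathcal{I}})$ (identifying $\varphi(x\restriction D)$ with any point of ${}^{\kappa}\nu$ extending it is unnecessary: explicitly,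 $\varphi^*(x)$ is the unique $z\in{}^{\kappa}\nu$ such that for every $D\in\mathcal{I}$ there is $E\in\mathcal{I}$ with $z\restriction D=\varphi(x\restriction E')\restriction D$ for all $E'\in\mathcal{I}$ with $E\subseteq E'$). *)

theory Defs
  imports "HOL-Analysis.Analysis"
begin

text \<open>The cardinal kappa is represented by a cardinal well-order r on the type 'k
  (Field r = UNIV).\<close>

definition bounded_in :: "'k rel \<Rightarrow> 'k set \<Rightarrow> bool" where
  "bounded_in r A \<longleftrightarrow> (\<exists>\<alpha>. \<forall>\<beta>\<in>A. (\<beta>, \<alpha>) \<in> r)"

definition kappa_complete_ideal :: "'k rel \<Rightarrow> 'k set set \<Rightarrow> bool" where
  "kappa_complete_ideal r I \<longleftrightarrow>
     (\<forall>A B. A \<in> I \<longrightarrow> B \<subseteq> A \<longrightarrow> B \<in> I) \<and>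
     (\<forall>F. F \<subseteq> I \<longrightarrow> (card_of F, r) \<in> ordLess \<longrightarrow> \<Union>F \<in> I) \<and>
     UNIV \<notin> I \<and>
     (\<forall>A. bounded_in r A \<longrightarrow> A \<in> I)"

definition Fn :: "'k set set \<Rightarrow> ('k \<rightharpoonup> 'v) set" where
  "Fn I = {f. dom f \<in> I}"

definition restr :: "('k \<Rightarrow> 'v) \<Rightarrow> 'k set \<Rightarrow> ('k \<rightharpoonup> 'v)" where
  "restr x D = (Some \<circ> x) |` D"

definition Nbhd :: "('k \<rightharpoonup> 'v) \<Rightarrow> ('k \<Rightarrow> 'v) set" where
  "Nbhd f = {x. f \<subseteq>\<^sub>m Some \<circ> x}"

definition tau :: "'k set set \<Rightarrow> ('k \<Rightarrow> 'v) topology" where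
  "tau I = topology_generated_by (Nbhd ` Fn I)"

definition monotone_Fn :: "'k set set \<Rightarrow> (('k \<rightharpoonup> 'v) \<Rightarrow> ('k \<rightharpoonup> 'v)) \<Rightarrow> bool" where
  "monotone_Fn I \<phi> \<longleftrightarrow>
     (\<forall>f\<in>Fn I. \<forall>g\<in>Fn I. f \<subseteq>\<^sub>m g \<longrightarrow> \<phi> f \<subseteq>\<^sub>m \<phi> g)"

definition continuous_Fn :: "'k set set \<Rightarrow> (('k \<rightharpoonup> 'v) \<Rightarrow> ('k \<rightharpoonup> 'v)) \<Rightarrow> bool" where
  "continuous_Fn I \<phi> \<longleftrightarrow> monotone_Fn I \<phi> \<and>
     (\<forall>x. \<forall>D\<in>I. \<exists>E\<in>I. D \<subseteq> dom (\<phi> (restr x E)))"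

definition phi_star :: "'k set set \<Rightarrow> (('k \<rightharpoonup> 'v) \<Rightarrow> ('k \<rightharpoonup> 'v)) \<Rightarrow> ('k \<Rightarrow> 'v) \<Rightarrow> ('k \<Rightarrow> 'v)" where
  "phi_star I \<phi> x = (THE z. \<forall>D\<in>I. \<exists>E\<in>I. \<forall>E'\<in>I. E \<subseteq> E' \<longrightarrow>
       (\<forall>\<alpha>\<in>D. \<phi> (restr x E') \<alpha> = Some (z \<alpha>)))"

end

theory Submission
  imports Defs
begin

text \<open>The value of \<open>\<phi>\<^sup>*(x)\<close> at \<open>\<alpha>\<close> is already fixed by \<open>\<phi>(x|E)\<close> for a single
  \<open>E \<in> I\<close>, by monotonicity of \<open>\<phi>\<close> and closure of \<open>I\<close> under finite unions. Every \<open>y\<close> in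
  the basic neighbourhood \<open>N\<^bsub>x|E\<^esub>\<close> has \<open>y|E = x|E\<close>, so \<open>\<phi>\<^sup>*(y)\<close> agrees with \<open>\<phi>\<^sup>*(x)\<close>
  on \<open>dom (\<phi>(x|E))\<close>; choosing \<open>E\<close> with \<open>dom f \<subseteq> dom (\<phi>(x|E))\<close> shows that the
  preimage of \<open>N\<^sub>f\<close> is open. Of the hypotheses on \<open>\<kappa>\<close>, \<open>I\<close> and \<open>\<nu>\<close> only two
  consequences are used: \<open>I\<close> is closed under binary unions (as \<open>\<kappa>\<close> is infinite) and
  contains all singletons (as they are bounded).\<close>

lemma dom_restr [simp]: "dom (restr x E) = E"
  by (auto simp: restr_def)

lemma restr_mono: "E \<subseteq> E' \<Longrightarrow> restr x E \<subseteq>\<^sub>m restr x E'"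
  by (auto simp: restr_def map_le_def)

lemma restr_in_Nbhd: "x \<in> Nbhd (restr x E)"
  by (simp add: Nbhd_def map_le_def restr_def)

lemma restr_eq_if_in_Nbhd:
  assumes "y \<in> Nbhd (restr x E)"
  shows "restr y E = restr x E"
proof
  fix a
  show "restr y E a = restr x E a"
  proof (cases "a \<in> E")
    case True
    then have "restr x E a = Some (y a)"
      using assms unfolding Nbhd_def map_le_def by auto
    then show ?thesis using True by (simp add: restr_def)
  qed (simp add: restr_def)
qed

lemma restr_in_Fn: "E \<in> I \<Longrightarrow> restr x E \<in> Fn I"
  by (simp add: Fn_def)

lemma topspace_tau:
  assumes "E \<in> I"
  shows "topspace (tau I) = UNIV"
proof -
  have "x \<in> \<Union> (Nbhd ` Fn I)" for x
    using UN_I[where B = Nbhd, OF restr_in_Fn[OF assms] restr_in_Nbhd] .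
  then show ?thesis by (auto simp: tau_def)
qed

lemma openin_tau_Nbhd: "f \<in> Fn I \<Longrightarrow> openin (tau I) (Nbhd f)"
  unfolding tau_def by (intro topology_generated_by_Basis imageI)

lemma continuous_map_into_tau:
  fixes g :: "'a \<Rightarrow> ('k \<Rightarrow> 'v)"
  assumes "E \<in> I" "\<And>f. f \<in> Fn I \<Longrightarrow> openin X (g -` Nbhd f \<inter> topspace X)"
  shows "continuous_map X (tau I) g"
proof -
  have "\<Union> (Nbhd ` Fn I) = (UNIV :: ('k \<Rightarrow> 'v) set)"
    using topspace_tau[OF assms(1)] by (simp add: tau_def)
  then show ?thesis
    unfolding tau_def using assms(2) by (intro continuous_on_generated_topo) auto
qed

lemma kappa_complete_ideal_Un:
  assumes "Well_order r" "infinite (Field r)" "kappa_complete_ideal r I" "A \<in> I" "B \<in> I"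
  shows "A \<union> B \<in> I"
proof -
  have "finite (Field (card_of {A, B}))"
    by (simp only: Field_card_of) simp
  then have "(card_of {A, B}, r) \<in> ordLess"
    by (rule finite_ordLess_infinite[OF card_of_Well_order assms(1) _ assms(2)])
  moreover have "\<forall>F\<subseteq>I. (card_of F, r) \<in> ordLess \<longrightarrow> \<Union>F \<in> I"
    using assms(3) unfolding kappa_complete_ideal_def by (elim conjE)
  then have "{A, B} \<subseteq> I \<longrightarrow> (card_of {A, B}, r) \<in> ordLess \<longrightarrow> \<Union>{A, B} \<in> I"
    by (rule allE)
  ultimately show ?thesis
    using assms(4,5) by simp
qed

lemma kappa_complete_ideal_singleton:
  assumes "Well_order r" "a \<in> Field r" "kappa_complete_ideal r I"
  shows "{a} \<in> I"
proof -
  have "Refl r"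
    using assms(1) by (rule wo_rel.REFL[unfolded wo_rel_def])
  then have "(a, a) \<in> r"
    using assms(2) by (rule refl_onD)
  then have "bounded_in r {a}"
    unfolding bounded_in_def by blast
  moreover have "\<forall>A. bounded_in r A \<longrightarrow> A \<in> I"
    using assms(3) unfolding kappa_complete_ideal_def by (elim conjE)
  ultimately show ?thesis by blast
qed

definition phi_limit ::
    "'k set set \<Rightarrow> (('k \<rightharpoonup> 'v) \<Rightarrow> ('k \<rightharpoonup> 'v)) \<Rightarrow> ('k \<Rightarrow> 'v) \<Rightarrow> ('k \<Rightarrow> 'v) \<Rightarrow> bool" where
  "phi_limit I \<phi> x z \<longleftrightarrow> (\<forall>D\<in>I. \<exists>E\<in>I. \<forall>E'\<in>I. E \<subseteq> E' \<longrightarrow>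
     (\<forall>\<alpha>\<in>D. \<phi> (restr x E') \<alpha> = Some (z \<alpha>)))"

lemma phi_star_eq_The: "phi_star I \<phi> x = (THE z. phi_limit I \<phi> x z)"
  by (simp add: phi_star_def phi_limit_def)

locale continuous_Fn_map =
  fixes I :: "'k set set" and \<phi> :: "('k \<rightharpoonup> 'v) \<Rightarrow> ('k \<rightharpoonup> 'v)"
  assumes ideal_Un: "A \<in> I \<Longrightarrow> B \<in> I \<Longrightarrow> A \<union> B \<in> I"
    and ideal_singleton: "{a} \<in> I"
    and continuous: "continuous_Fn I \<phi>"
begin

lemma phi_restr_mono:
  assumes "E \<in> I" "E' \<in> I" "E \<subseteq> E'"
  shows "\<phi> (restr x E) \<subseteq>\<^sub>m \<phi> (restr x E')"
proof -
  have "monotone_Fn I \<phi>"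
    using continuous unfolding continuous_Fn_def by (rule conjunct1)
  then show ?thesis
    using restr_in_Fn[OF assms(1)] restr_in_Fn[OF assms(2)] restr_mono[OF assms(3)]
    unfolding monotone_Fn_def by blast
qed

lemma phi_restr_defined: "D \<in> I \<Longrightarrow> \<exists>E\<in>I. D \<subseteq> dom (\<phi> (restr x E))"
  using continuous unfolding continuous_Fn_def by (elim conjE allE ballE) auto

lemma phi_restr_defined_at: "\<exists>E\<in>I. \<alpha> \<in> dom (\<phi> (restr x E))"
  using phi_restr_defined[OF ideal_singleton] by blast

lemma phi_restr_extend:
  assumes "E \<in> I" "E' \<in> I" "E \<subseteq> E'" "\<phi> (restr x E) a = Some v"
  shows "\<phi> (restr x E') a = Some v"
  using phi_restr_mono[OF assms(1-3)] assms(4) unfolding map_le_def by (metis domI)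

lemma phi_restr_consistent:
  assumes "E \<in> I" "E' \<in> I" "\<phi> (restr x E) a = Some v" "\<phi> (restr x E') a = Some w"
  shows "v = w"
proof -
  have "E \<union> E' \<in> I" using assms(1,2) by (rule ideal_Un)
  then have "\<phi> (restr x (E \<union> E')) a = Some v" "\<phi> (restr x (E \<union> E')) a = Some w"
    using phi_restr_extend[OF assms(1) \<open>E \<union> E' \<in> I\<close> Un_upper1 assms(3)]
      phi_restr_extend[OF assms(2) \<open>E \<union> E' \<in> I\<close> Un_upper2 assms(4)]
    by simp_all
  then show ?thesis by simp
qed

lemma phi_limit_eqI:
  assumes "phi_limit I \<phi> x z" "E \<in> I" "\<phi> (restr x E) a = Some v"
  shows "z a = v"
proof -
  have "\<exists>E0\<in>I. \<forall>E'\<in>I. E0 \<subseteq> E' \<longrightarrow> (\<forall>\<alpha>\<in>{a}. \<phi> (restr x E') \<alpha> = Some (z \<alpha>))"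
    using assms(1) unfolding phi_limit_def by (rule bspec) (rule ideal_singleton)
  then obtain E0 where "E0 \<in> I" and E0: "\<forall>E'\<in>I. E0 \<subseteq> E' \<longrightarrow> \<phi> (restr x E') a = Some (z a)"
    by auto
  have "E0 \<union> E \<in> I"
    using \<open>E0 \<in> I\<close> assms(2) by (rule ideal_Un)
  then have "\<phi> (restr x (E0 \<union> E)) a = Some (z a)"
    using E0 by simp
  then show ?thesis
    using phi_restr_consistent[OF assms(2) \<open>E0 \<union> E \<in> I\<close> assms(3)] by simp
qed

lemma phi_limit_exists: "\<exists>z. phi_limit I \<phi> x z"
proof -
  have "\<forall>\<alpha>. \<exists>v. \<exists>E\<in>I. \<phi> (restr x E) \<alpha> = Some v"
    using phi_restr_defined_at by blast
  from choice[OF this] obtain z where z: "\<forall>\<alpha>. \<exists>E\<in>I. \<phi> (restr x E) \<alpha> = Some (z \<alpha>)" ..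
  have "phi_limit I \<phi> x z"
    unfolding phi_limit_def
  proof
    fix D assume "D \<in> I"
    then obtain E where E: "E \<in> I" "D \<subseteq> dom (\<phi> (restr x E))"
      using phi_restr_defined by blast
    show "\<exists>E\<in>I. \<forall>E'\<in>I. E \<subseteq> E' \<longrightarrow> (\<forall>\<alpha>\<in>D. \<phi> (restr x E') \<alpha> = Some (z \<alpha>))"
    proof (intro bexI[OF _ E(1)] ballI impI)
      fix E' \<alpha> assume "E' \<in> I" "E \<subseteq> E'" "\<alpha> \<in> D"
      then obtain u where u: "\<phi> (restr x E) \<alpha> = Some u"
        using E(2) by auto
      obtain E\<^sub>\<alpha> where "E\<^sub>\<alpha> \<in> I" "\<phi> (restr x E\<^sub>\<alpha>) \<alpha> = Some (z \<alpha>)"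
        using z by blast
      then have "z \<alpha> = u"
        using phi_restr_consistent[OF _ E(1) _ u] by simp
      then show "\<phi> (restr x E') \<alpha> = Some (z \<alpha>)"
        using phi_restr_extend[OF E(1) \<open>E' \<in> I\<close> \<open>E \<subseteq> E'\<close> u] by simp
    qed
  qed
  then show ?thesis by blast
qed

lemma phi_limit_unique:
  assumes "phi_limit I \<phi> x z" "phi_limit I \<phi> x z'"
  shows "z' = z"
proof
  fix \<alpha>
  obtain E v where "E \<in> I" "\<phi> (restr x E) \<alpha> = Some v"
    using phi_restr_defined_at by blast
  then show "z' \<alpha> = z \<alpha>"
    using phi_limit_eqI[OF assms(1)] phi_limit_eqI[OF assms(2)] by simp
qed

lemma phi_limit_phi_star: "phi_limit I \<phi> x (phi_star I \<phi> x)"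
proof -
  obtain z where z: "phi_limit I \<phi> x z"
    using phi_limit_exists ..
  show ?thesis
    unfolding phi_star_eq_The
    by (rule theI[where P = "phi_limit I \<phi> x", OF z phi_limit_unique[OF z]])
qed

lemma phi_star_eqI: "E \<in> I \<Longrightarrow> \<phi> (restr x E) a = Some v \<Longrightarrow> phi_star I \<phi> x a = v"
  by (rule phi_limit_eqI[OF phi_limit_phi_star])

lemma phi_star_eq_on_Nbhd:
  assumes "E \<in> I" "y \<in> Nbhd (restr x E)" "a \<in> dom (\<phi> (restr x E))"
  shows "phi_star I \<phi> y a = phi_star I \<phi> x a"
proof -
  obtain v where v: "\<phi> (restr x E) a = Some v"
    using assms(3) by auto
  then have "\<phi> (restr y E) a = Some v"
    using restr_eq_if_in_Nbhd[OF assms(2)] by simp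
  then show ?thesis
    using phi_star_eqI[OF assms(1)] v by simp
qed

lemma openin_tau_preimage_phi_star:
  assumes "f \<in> Fn I"
  shows "openin (tau I) (phi_star I \<phi> -` Nbhd f)"
proof (subst openin_subopen, intro ballI)
  fix x assume x: "x \<in> phi_star I \<phi> -` Nbhd f"
  obtain E where E: "E \<in> I" "dom f \<subseteq> dom (\<phi> (restr x E))"
    using phi_restr_defined assms unfolding Fn_def by blast
  have "Nbhd (restr x E) \<subseteq> phi_star I \<phi> -` Nbhd f"
  proof
    fix y assume y: "y \<in> Nbhd (restr x E)"
    have "f a = Some (phi_star I \<phi> y a)" if "a \<in> dom f" for a
    proof -
      have "a \<in> dom (\<phi> (restr x E))"
        using E(2) that by blast
      then show ?thesis
        using x that phi_star_eq_on_Nbhd[OF E(1) y] by (auto simp: Nbhd_def map_le_def)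
    qed
    then show "y \<in> phi_star I \<phi> -` Nbhd f"
      by (simp add: Nbhd_def map_le_def)
  qed
  then show "\<exists>T. openin (tau I) T \<and> x \<in> T \<and> T \<subseteq> phi_star I \<phi> -` Nbhd f"
    by (intro exI[of _ "Nbhd (restr x E)"] conjI openin_tau_Nbhd restr_in_Fn E(1) restr_in_Nbhd)
qed

lemma continuous_map_phi_star: "continuous_map (tau I) (tau I) (phi_star I \<phi>)"
  using ideal_singleton
proof (rule continuous_map_into_tau)
  have "topspace (tau I :: ('k \<Rightarrow> 'v) topology) = UNIV"
    by (rule topspace_tau[OF ideal_singleton])
  then show "openin (tau I) (phi_star I \<phi> -` Nbhd f \<inter> topspace (tau I))" if "f \<in> Fn I" for f
    using openin_tau_preimage_phi_star[OF that] by simp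
qed

end

theorem proposition3p2:
  fixes r :: "'k rel" and I :: "'k set set"
    and \<phi> :: "('k \<rightharpoonup> 'v) \<Rightarrow> ('k \<rightharpoonup> 'v)"
  assumes "card_order r"
    and "\<not> countable (UNIV :: 'k set)"
    and "regularCard r"
    and "kappa_complete_ideal r I"
    and "card (UNIV :: 'v set) = 2 \<or> (card_of (UNIV :: 'v set), r) \<in> ordIso"
    and "\<forall>f\<in>Fn I. \<phi> f \<in> Fn I"
    and "continuous_Fn I \<phi>"
  shows "continuous_map (tau I) (tau I) (phi_star I \<phi>)"
proof -
  have field: "Field r = UNIV" and wo: "Well_order r"
    using well_order_on_Well_order[OF card_order_on_well_order_on[OF assms(1)]] by auto
  have "infinite (Field r)"
    using assms(2) field countable_finite by auto
  then interpret continuous_Fn_map I \<phi>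
    using kappa_complete_ideal_Un[OF wo] kappa_complete_ideal_singleton[OF wo] field assms(4,7)
    by unfold_locales auto
  show ?thesis by (rule continuous_map_phi_star)
qed

end
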